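(* Let $G$ be a finite simple graph on $n$ vertices such that $\xi(G)=1$, i.e. $G$ has exactly one independent set of size $\alpha(G)$. Then $i_{\alpha(G)-1}\le 3^{\frac{n}{3}}+n-1$, where $i_{\alpha(G)-1}$ is the number of independent sets of size $\alpha(G)-1$ in $G$.
   Context: $\alpha(G)$ is the independence number of $G$ (maximum size of an independent set), $\xi(G)$ is the number of maximum independent sets of $G$, and $i_k$ denotes the number of independent sets of size $k$ in $G$. *)

theory Defs
  imports Main Complex_Main
begin

text \<open>A finite simple graph: finite vertex set V with a symmetric irreflexive
edge relation E (only its restriction to V matters).\<close>
definition simple_graph :: "'a set \<Rightarrow> ('a \<Rightarrow> 'a \<Rightarrow> bool) \<Rightarrow> bool" where
  "simple_graph V E \<longleftrightarrow> finite V \<and> (\<forall>u\<in>V. \<forall>v\<in>V. E u v \<longrightarrow> E v u) \<and> (\<forall>v\<in>V. \<not> E v v)"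

definition indep_set :: "'a set \<Rightarrow> ('a \<Rightarrow> 'a \<Rightarrow> bool) \<Rightarrow> 'a set \<Rightarrow> bool" where
  "indep_set V E S \<longleftrightarrow> S \<subseteq> V \<and> (\<forall>u\<in>S. \<forall>v\<in>S. \<not> E u v)"

definition indep_num :: "'a set \<Rightarrow> ('a \<Rightarrow> 'a \<Rightarrow> bool) \<Rightarrow> nat" where
  "indep_num V E = Max {card S | S. indep_set V E S}"

definition num_max_indep :: "'a set \<Rightarrow> ('a \<Rightarrow> 'a \<Rightarrow> bool) \<Rightarrow> nat" where
  "num_max_indep V E = card {S. indep_set V E S \<and> card S = indep_num V E}"

text \<open>i_k: number of independent sets of size k (k an integer; 0 for k < 0)\<close>
definition num_indep_k :: "'a set \<Rightarrow> ('a \<Rightarrow> 'a \<Rightarrow> bool) \<Rightarrow> int \<Rightarrow> nat" where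
  "num_indep_k V E k = card {S. indep_set V E S \<and> int (card S) = k}"

end

theory Submission
  imports Defs
begin

text \<open>Let \<open>S\<close> be the unique maximum independent set, of size \<open>a \<le> n\<close>. An independent set
of size \<open>a - 1\<close> either extends to an independent set of size \<open>a\<close>, which must be \<open>S\<close>, so it is
one of the \<open>a\<close> subsets of \<open>S\<close> of that size; or it cannot be extended, i.e. it is a maximal
independent set other than \<open>S\<close>. By the Moon-Moser theorem there are at most \<open>3 ^ (n / 3)\<close>
maximal independent sets, and \<open>S\<close> is one of them.

Moon-Moser follows by branching: every maximal independent set meets the closed neighbourhood
\<open>N[v]\<close> of a vertex \<open>v\<close> of minimum degree \<open>k - 1\<close>; those containing \<open>u \<in> N[v]\<close> correspond
injectively to maximal independent sets of \<open>G - N[u]\<close>, which has at most \<open>n - k\<close> vertices; and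
\<open>k * 3 ^ ((n - k) / 3) \<le> 3 ^ (n / 3)\<close> because \<open>k ^ 3 \<le> 3 ^ k\<close>.\<close>

lemma cube_le_three_power: "k ^ 3 \<le> (3::nat) ^ k"
proof (cases "k \<le> 3")
  case True
  then have "k \<in> {0, 1, 2, 3}" by auto
  then show ?thesis by auto
next
  case False
  then have "3 \<le> k" by simp
  then show ?thesis
  proof (induction k rule: nat_induct_at_least)
    case base
    then show ?case by simp
  next
    case (Suc j)
    have "9 * j \<le> j ^ 3"
      using mult_le_mono1[OF mult_le_mono[OF Suc.hyps Suc.hyps], of j]
      by (simp add: power3_eq_cube)
    moreover have "3 * j\<^sup>2 \<le> j ^ 3"
      using Suc.hyps by (simp add: power3_eq_cube power2_eq_square)
    moreover have "(Suc j) ^ 3 = j ^ 3 + 3 * j\<^sup>2 + 3 * j + 1"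
      by (simp add: power3_eq_cube power2_eq_square algebra_simps)
    ultimately have "(Suc j) ^ 3 \<le> 3 * j ^ 3"
      using Suc.hyps by linarith
    then show ?case
      using Suc.IH by simp
  qed
qed

lemma real_le_three_powr_third: "real k \<le> 3 powr (real k / 3)"
proof (rule ccontr)
  assume "\<not> ?thesis"
  then have "(3 powr (real k / 3)) ^ 3 < real k ^ 3"
    by (intro power_strict_mono) auto
  also have "(3 powr (real k / 3)) ^ 3 = 3 ^ k"
    by (simp add: powr_realpow[symmetric] powr_powr)
  finally have "real (3 ^ k) < real (k ^ 3)"
    by simp
  then show False
    using cube_le_three_power[of k] by linarith
qed

lemma mult_three_powr_third_le:
  assumes "k \<le> n"
  shows "real k * 3 powr (real (n - k) / 3) \<le> 3 powr (real n / 3)"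
proof -
  have "real k * 3 powr (real (n - k) / 3) \<le> 3 powr (real k / 3) * 3 powr (real (n - k) / 3)"
    by (rule mult_right_mono[OF real_le_three_powr_third]) simp
  also have "\<dots> = 3 powr (real n / 3)"
    using assms by (simp add: powr_add[symmetric] of_nat_diff add_divide_distrib[symmetric])
  finally show ?thesis .
qed

lemma simple_graph_subset: "simple_graph V E \<Longrightarrow> W \<subseteq> V \<Longrightarrow> simple_graph W E"
  by (auto simp: simple_graph_def finite_subset)

lemma finite_indep_sets: "finite V \<Longrightarrow> finite {S. indep_set V E S}"
  by (rule finite_subset[of _ "Pow V"]) (auto simp: indep_set_def)

lemma card_le_indep_num: "finite V \<Longrightarrow> indep_set V E S \<Longrightarrow> card S \<le> indep_num V E"
  unfolding indep_num_def
  by (rule Max_ge) (auto simp: setcompr_eq_image finite_indep_sets)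

definition maximal_indep_set :: "'a set \<Rightarrow> ('a \<Rightarrow> 'a \<Rightarrow> bool) \<Rightarrow> 'a set \<Rightarrow> bool" where
  "maximal_indep_set V E I \<longleftrightarrow> indep_set V E I \<and> (\<forall>x\<in>V - I. \<not> indep_set V E (insert x I))"

lemma finite_maximal_indep_sets: "finite V \<Longrightarrow> finite {I. maximal_indep_set V E I}"
  by (rule finite_subset[OF _ finite_indep_sets]) (auto simp: maximal_indep_set_def)

definition closed_nbhd :: "'a set \<Rightarrow> ('a \<Rightarrow> 'a \<Rightarrow> bool) \<Rightarrow> 'a \<Rightarrow> 'a set" where
  "closed_nbhd V E u = insert u {w\<in>V. E u w}"

lemma closed_nbhd_subset: "u \<in> V \<Longrightarrow> closed_nbhd V E u \<subseteq> V"
  by (auto simp: closed_nbhd_def)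

lemma finite_closed_nbhd: "finite V \<Longrightarrow> finite (closed_nbhd V E u)"
  by (simp add: closed_nbhd_def)

lemma maximal_indep_set_meets_closed_nbhd:
  assumes G: "simple_graph V E" and I: "maximal_indep_set V E I" and v: "v \<in> V"
  shows "\<exists>u\<in>closed_nbhd V E v. u \<in> I"
proof (cases "v \<in> I")
  case True
  then show ?thesis by (auto simp: closed_nbhd_def)
next
  case False
  then have "\<not> indep_set V E (insert v I)"
    using I v by (auto simp: maximal_indep_set_def)
  then obtain w where "w \<in> I" "E v w"
    using G I v unfolding maximal_indep_set_def indep_set_def simple_graph_def by blast
  then show ?thesis
    using I by (auto simp: closed_nbhd_def maximal_indep_set_def indep_set_def)
qed

lemma maximal_indep_set_Diff_closed_nbhd:
  assumes G: "simple_graph V E" and I: "maximal_indep_set V E I" and u: "u \<in> I"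
  shows "maximal_indep_set (V - closed_nbhd V E u) E (I - {u})"
proof -
  have IV: "I \<subseteq> V" and indep: "\<forall>a\<in>I. \<forall>b\<in>I. \<not> E a b"
    using I by (auto simp: maximal_indep_set_def indep_set_def)
  have "\<not> indep_set (V - closed_nbhd V E u) E (insert x (I - {u}))"
    if x: "x \<in> V - closed_nbhd V E u - (I - {u})" for x
  proof -
    have "x \<in> V - I" "x \<noteq> u"
      using x u indep by (auto simp: closed_nbhd_def)
    then obtain a b where ab: "a \<in> insert x I" "b \<in> insert x I" "E a b"
      using I IV unfolding maximal_indep_set_def indep_set_def by blast
    have "\<not> E u x" "\<not> E x u"
      using x u IV G by (auto simp: closed_nbhd_def simple_graph_def)
    then have "a \<noteq> u" "b \<noteq> u"
      using ab indep u by auto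
    with ab show ?thesis
      by (auto simp: indep_set_def)
  qed
  moreover have "I - {u} \<subseteq> V - closed_nbhd V E u"
    using IV indep u by (auto simp: closed_nbhd_def)
  ultimately show ?thesis
    using indep by (auto simp: maximal_indep_set_def indep_set_def)
qed

lemma card_maximal_indep_sets_containing_le:
  assumes G: "simple_graph V E"
  shows "card {I. maximal_indep_set V E I \<and> u \<in> I}
           \<le> card {J. maximal_indep_set (V - closed_nbhd V E u) E J}"
proof (rule card_inj_on_le)
  show "inj_on (\<lambda>I. I - {u}) {I. maximal_indep_set V E I \<and> u \<in> I}"
    by (rule inj_onI) (metis insert_Diff mem_Collect_eq)
  show "(\<lambda>I. I - {u}) ` {I. maximal_indep_set V E I \<and> u \<in> I}
          \<subseteq> {J. maximal_indep_set (V - closed_nbhd V E u) E J}"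
    using maximal_indep_set_Diff_closed_nbhd[OF G] by blast
  show "finite {J. maximal_indep_set (V - closed_nbhd V E u) E J}"
    using G by (intro finite_maximal_indep_sets) (simp add: simple_graph_def)
qed

lemma card_maximal_indep_sets_le_sum:
  assumes G: "simple_graph V E" and v: "v \<in> V"
  shows "card {I. maximal_indep_set V E I}
           \<le> (\<Sum>u\<in>closed_nbhd V E v. card {I. maximal_indep_set V E I \<and> u \<in> I})"
proof -
  have fin: "finite V"
    using G by (simp add: simple_graph_def)
  have "{I. maximal_indep_set V E I}
          \<subseteq> (\<Union>u\<in>closed_nbhd V E v. {I. maximal_indep_set V E I \<and> u \<in> I})"
    using maximal_indep_set_meets_closed_nbhd[OF G _ v] by blast
  then have "card {I. maximal_indep_set V E I}
               \<le> card (\<Union>u\<in>closed_nbhd V E v. {I. maximal_indep_set V E I \<and> u \<in> I})"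
    by (intro card_mono finite_UN_I finite_closed_nbhd[OF fin]
        finite_subset[OF _ finite_maximal_indep_sets[OF fin]]) auto
  also have "\<dots> \<le> (\<Sum>u\<in>closed_nbhd V E v. card {I. maximal_indep_set V E I \<and> u \<in> I})"
    by (rule card_UN_le[OF finite_closed_nbhd[OF fin]])
  finally show ?thesis .
qed

theorem moon_moser:
  "simple_graph V E \<Longrightarrow> real (card {I. maximal_indep_set V E I}) \<le> 3 powr (real (card V) / 3)"
proof (induction "card V" arbitrary: V rule: less_induct)
  case less
  have fin: "finite V"
    using less.prems by (simp add: simple_graph_def)
  show ?case
  proof (cases "V = {}")
    case True
    then have "{I. maximal_indep_set V E I} \<subseteq> {{}}"
      by (auto simp: maximal_indep_set_def indep_set_def)
    then have "card {I. maximal_indep_set V E I} \<le> card {{} :: 'a set}"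
      by (intro card_mono) auto
    then show ?thesis
      using True by simp
  next
    case False
    define n where "n = card V"
    obtain v where v: "v \<in> V"
      and v_min: "\<And>u. u \<in> V \<Longrightarrow> card (closed_nbhd V E v) \<le> card (closed_nbhd V E u)"
      using ex_has_least_nat[of "\<lambda>u. u \<in> V" _ "\<lambda>u. card (closed_nbhd V E u)"] False
      by blast
    define k where "k = card (closed_nbhd V E v)"
    have "k \<le> n"
      unfolding k_def n_def by (rule card_mono[OF fin closed_nbhd_subset[OF v]])
    have branch: "real (card {I. maximal_indep_set V E I \<and> u \<in> I}) \<le> 3 powr (real (n - k) / 3)"
      if u: "u \<in> closed_nbhd V E v" for u
    proof -
      have uV: "u \<in> V"
        using u closed_nbhd_subset[OF v] by auto
      let ?W = "V - closed_nbhd V E u"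
      have card_W: "card ?W = n - card (closed_nbhd V E u)"
        unfolding n_def using fin closed_nbhd_subset[OF uV]
        by (simp add: card_Diff_subset finite_closed_nbhd)
      have "card ?W < card V"
        using fin uV by (intro psubset_card_mono) (auto simp: closed_nbhd_def)
      then have "real (card {J. maximal_indep_set ?W E J}) \<le> 3 powr (real (card ?W) / 3)"
        using less.hyps simple_graph_subset[OF less.prems Diff_subset] by blast
      also have "\<dots> \<le> 3 powr (real (n - k) / 3)"
        using card_W v_min[OF uV] unfolding k_def by simp
      finally show ?thesis
        using card_maximal_indep_sets_containing_le[OF less.prems, of u] by linarith
    qed
    have "real (card {I. maximal_indep_set V E I})
            \<le> (\<Sum>u\<in>closed_nbhd V E v. real (card {I. maximal_indep_set V E I \<and> u \<in> I}))"
      using card_maximal_indep_sets_le_sum[OF less.prems v] by (metis of_nat_le_iff of_nat_sum)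
    also have "\<dots> \<le> real k * 3 powr (real (n - k) / 3)"
      using sum_mono[OF branch] by (simp add: k_def)
    also have "\<dots> \<le> 3 powr (real n / 3)"
      using mult_three_powr_third_le[OF \<open>k \<le> n\<close>] .
    finally show ?thesis
      by (simp add: n_def)
  qed
qed

lemma maximum_indep_set_is_maximal:
  assumes "finite V" "indep_set V E S" "card S = indep_num V E"
  shows "maximal_indep_set V E S"
proof -
  have "finite S"
    using assms finite_subset unfolding indep_set_def by blast
  then have "\<not> indep_set V E (insert x S)" if "x \<in> V - S" for x
    using that assms card_le_indep_num[of V E "insert x S"] by auto
  then show ?thesis
    using assms by (simp add: maximal_indep_set_def)
qed

lemma indep_sets_below_unique_maximum:
  assumes "finite V"
    and unique: "{T. indep_set V E T \<and> card T = indep_num V E} = {S}"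
    and "indep_num V E = Suc b"
  shows "{U. indep_set V E U \<and> card U = b}
           \<subseteq> {U. U \<subseteq> S \<and> card U = b} \<union> ({I. maximal_indep_set V E I} - {S})"
proof
  fix U
  assume "U \<in> {U. indep_set V E U \<and> card U = b}"
  then have U: "indep_set V E U" "card U = b"
    by simp_all
  show "U \<in> {U. U \<subseteq> S \<and> card U = b} \<union> ({I. maximal_indep_set V E I} - {S})"
  proof (cases "maximal_indep_set V E U \<and> U \<noteq> S")
    case True
    then show ?thesis by simp
  next
    case False
    have "S \<in> {T. indep_set V E T \<and> card T = indep_num V E}"
      using unique by simp
    then have "U \<noteq> S"
      using U assms(3) by auto
    with False obtain x where x: "x \<in> V - U" "indep_set V E (insert x U)"
      using U by (auto simp: maximal_indep_set_def)
    have "finite U"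
      using U \<open>finite V\<close> finite_subset unfolding indep_set_def by blast
    then have "insert x U \<in> {T. indep_set V E T \<and> card T = indep_num V E}"
      using x U assms(3) by simp
    then have "insert x U = S"
      using unique by simp
    then show ?thesis
      using U by blast
  qed
qed

lemma num_indep_below_unique_maximum:
  assumes fin: "finite V"
    and unique: "{T. indep_set V E T \<and> card T = indep_num V E} = {S}"
    and a: "indep_num V E = Suc b"
  shows "num_indep_k V E (int b) + 1 \<le> indep_num V E + card {I. maximal_indep_set V E I}"
proof -
  define M where "M = {I. maximal_indep_set V E I}"
  have S: "indep_set V E S" "card S = indep_num V E"
    using unique by auto
  then have "finite S"
    using fin finite_subset unfolding indep_set_def by blast
  have "S \<in> M" "finite M"
    using maximum_indep_set_is_maximal[OF fin S] finite_maximal_indep_sets[OF fin]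
    by (simp_all add: M_def)
  have "finite {U. U \<subseteq> S \<and> card U = b}"
    by (rule finite_subset[of _ "Pow S"]) (auto simp: \<open>finite S\<close>)
  then have "num_indep_k V E (int b) \<le> card ({U. U \<subseteq> S \<and> card U = b} \<union> (M - {S}))"
    unfolding num_indep_k_def M_def
    using indep_sets_below_unique_maximum[OF fin unique a] \<open>finite M\<close>
    by (intro card_mono) (auto simp: M_def)
  also have "\<dots> \<le> card {U. U \<subseteq> S \<and> card U = b} + card (M - {S})"
    by (rule card_Un_le)
  also have "\<dots> = indep_num V E + card M - 1"
    using n_subsets[OF \<open>finite S\<close>] S a \<open>S \<in> M\<close> \<open>finite M\<close> card_gt_0_iff[of M] by auto
  finally show ?thesis
    using a by (simp add: M_def)
qed

theorem lemma2:
  fixes V :: "'a set" and E :: "'a \<Rightarrow> 'a \<Rightarrow> bool"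
  assumes "simple_graph V E"
    and "num_max_indep V E = 1"
  shows "real (num_indep_k V E (int (indep_num V E) - 1))
           \<le> 3 powr (real (card V) / 3) + real (card V) - 1"
proof -
  have fin: "finite V"
    using assms(1) by (simp add: simple_graph_def)
  obtain S where S: "{T. indep_set V E T \<and> card T = indep_num V E} = {S}"
    using assms(2) card_1_singletonE unfolding num_max_indep_def by blast
  then have "indep_set V E S" "card S = indep_num V E"
    by auto
  then have "indep_num V E \<le> card V"
    using card_mono[OF fin] unfolding indep_set_def by metis
  show ?thesis
  proof (cases "indep_num V E")
    case 0
    then have "num_indep_k V E (int (indep_num V E) - 1) = 0"
      by (simp add: num_indep_k_def)
    moreover have "1 \<le> 3 powr (real (card V) / 3)"
      by (rule ge_one_powr_ge_zero) auto
    ultimately show ?thesis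
      by simp
  next
    case (Suc b)
    then have "real (num_indep_k V E (int (indep_num V E) - 1)) + 1
                 \<le> real (indep_num V E) + real (card {I. maximal_indep_set V E I})"
      using num_indep_below_unique_maximum[OF fin S Suc] by (simp flip: of_nat_add)
    then show ?thesis
      using moon_moser[OF assms(1)] \<open>indep_num V E \<le> card V\<close> by linarith
  qed
qed

end
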